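(* Let $\alpha>0$, $\delta>0$, $S\ge0$, $D>0$. Let $N_1,N_2\ge1$ and let $p_{i,k}$ ($i,k\in\{1,\dots,N_1\}$), $q_{j,k}$ ($j,k\in\{1,\dots,N_2\}$), $r_{i,k}$ ($i\in\{1,\dots,N_1\},k\in\{1,\dots,N_2\}$) be continuous real functions of $t\ge0$ with $p_{i,k}=p_{k,i}\ge S$, $q_{j,k}=q_{k,j}\ge S$ and $0\le r_{i,k}\le D$. Let $(x^{(1)},x^{(2)}):[0,\infty)\to\mathbb{R}^{N_1}\times\mathbb{R}^{N_2}$ be a $C^1$ solution of $$\frac{d}{dt}x^{(1)}_i=\alpha\sum_{k=1}^{N_1}p_{k,i}\bigl(x^{(1)}_k-x^{(1)}_i\bigr)-\alpha\sum_{k=1}^{N_2}r_{i,k}\bigl(x^{(2)}_k-x^{(1)}_i\bigr)+\delta x^{(1)}_i\bigl(1-(x^{(1)}_i)^2\bigr),$$ $$\frac{d}{dt}x^{(2)}_j=\alpha\sum_{k=1}^{N_2}q_{k,j}\bigl(x^{(2)}_k-x^{(2)}_j\bigr)-\alpha\sum_{k=1}^{N_1}r_{k,j}\bigl(x^{(1)}_k-x^{(2)}_j\bigr)+\delta x^{(2)}_j\bigl(1-(x^{(2)}_j)^2\bigr).$$ Then $$\frac{d}{dt}M_2=-\frac{\alpha}{N_1}\sum_{i,k=1}^{N_1}p_{k,i}(x^{(1)}_k-x^{(1)}_i)^2-\frac{2\alpha}{N_1}\sum_{k=1}^{N_2}\sum_{i=1}^{N_1}r_{i,k}(x^{(2)}_k-x^{(1)}_i)x^{(1)}_i+\frac{2\delta}{N_1}\sum_{i=1}^{N_1}(x^{(1)}_i)^2\bigl(1-(x^{(1)}_i)^2\bigr)$$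 $$\qquad-\frac{\alpha}{N_2}\sum_{j,k=1}^{N_2}q_{k,j}(x^{(2)}_k-x^{(2)}_j)^2-\frac{2\alpha}{N_2}\sum_{k=1}^{N_1}\sum_{j=1}^{N_2}r_{k,j}(x^{(1)}_k-x^{(2)}_j)x^{(2)}_j+\frac{2\delta}{N_2}\sum_{j=1}^{N_2}(x^{(2)}_j)^2\bigl(1-(x^{(2)}_j)^2\bigr),$$ and there exists a constant $M_2^\infty<\infty$ (depending only on $\alpha,\delta,D,N_1,N_2$ and $M_2(0)$) such that $\sup_{0\le t<\infty}M_2(t)\le M_2^\infty$.
   Context: This is the two-group form of the attractive–repulsive Allen–Cahn system $\frac{d}{dt}x_i=\alpha\sum_{j}(a_{i,j}-\beta_{i,j})(x_j-x_i)+\delta x_i(1-x_i^2)$ on $N=N_1+N_2$ nodes split into groups $\mathcal{I}_1$ (features $x^{(1)}_i$) and $\mathcal{I}_2$ (features $x^{(2)}_j$): within a group the coefficient $a_{i,j}-\beta_{i,j}$ is $p$ or $q$ (attraction, at least $S$), and between groups $a_{i,j}-\beta_{i,j}=-r$ (repulsion, of size at most $D$). Notation: $M_2(V)=\frac1{N_1}\sum_{i=1}^{N_1}(x^{(1)}_i)^2$, $M_2(W)=\frac1{N_2}\sum_{j=1}^{N_2}(x^{(2)}_j)^2$, $M_2=M_2(V)+M_2(W)$. *)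

theory Defs
  imports "HOL-Analysis.Analysis"
begin

definition M2grp :: "nat \<Rightarrow> (nat \<Rightarrow> real) \<Rightarrow> real" where
  "M2grp N v = (1 / real N) * (\<Sum>i=1..N. (v i)^2)"

definition M2tot :: "nat \<Rightarrow> nat \<Rightarrow> (nat \<Rightarrow> real) \<Rightarrow> (nat \<Rightarrow> real) \<Rightarrow> real" where
  "M2tot N1 N2 v w = M2grp N1 v + M2grp N2 w"

definition rhs1 :: "real \<Rightarrow> real \<Rightarrow> nat \<Rightarrow> nat \<Rightarrow>
    (nat \<Rightarrow> nat \<Rightarrow> real \<Rightarrow> real) \<Rightarrow> (nat \<Rightarrow> nat \<Rightarrow> real \<Rightarrow> real) \<Rightarrow>
    (real \<Rightarrow> nat \<Rightarrow> real) \<Rightarrow> (real \<Rightarrow> nat \<Rightarrow> real) \<Rightarrow> real \<Rightarrow> nat \<Rightarrow> real" where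
  "rhs1 \<alpha> \<delta> N1 N2 p r x1 x2 t i =
     \<alpha> * (\<Sum>k=1..N1. p k i t * (x1 t k - x1 t i))
     - \<alpha> * (\<Sum>k=1..N2. r i k t * (x2 t k - x1 t i))
     + \<delta> * x1 t i * (1 - (x1 t i)^2)"

definition rhs2 :: "real \<Rightarrow> real \<Rightarrow> nat \<Rightarrow> nat \<Rightarrow>
    (nat \<Rightarrow> nat \<Rightarrow> real \<Rightarrow> real) \<Rightarrow> (nat \<Rightarrow> nat \<Rightarrow> real \<Rightarrow> real) \<Rightarrow>
    (real \<Rightarrow> nat \<Rightarrow> real) \<Rightarrow> (real \<Rightarrow> nat \<Rightarrow> real) \<Rightarrow> real \<Rightarrow> nat \<Rightarrow> real" where
  "rhs2 \<alpha> \<delta> N1 N2 q r x1 x2 t j =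
     \<alpha> * (\<Sum>k=1..N2. q k j t * (x2 t k - x2 t j))
     - \<alpha> * (\<Sum>k=1..N1. r k j t * (x1 t k - x2 t j))
     + \<delta> * x2 t j * (1 - (x2 t j)^2)"

definition dM2 :: "real \<Rightarrow> real \<Rightarrow> nat \<Rightarrow> nat \<Rightarrow>
    (nat \<Rightarrow> nat \<Rightarrow> real \<Rightarrow> real) \<Rightarrow> (nat \<Rightarrow> nat \<Rightarrow> real \<Rightarrow> real) \<Rightarrow> (nat \<Rightarrow> nat \<Rightarrow> real \<Rightarrow> real) \<Rightarrow>
    (real \<Rightarrow> nat \<Rightarrow> real) \<Rightarrow> (real \<Rightarrow> nat \<Rightarrow> real) \<Rightarrow> real \<Rightarrow> real" where
  "dM2 \<alpha> \<delta> N1 N2 p q r x1 x2 t =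
     - \<alpha> / real N1 * (\<Sum>i=1..N1. \<Sum>k=1..N1. p k i t * (x1 t k - x1 t i)^2)
     - 2 * \<alpha> / real N1 * (\<Sum>k=1..N2. \<Sum>i=1..N1. r i k t * (x2 t k - x1 t i) * x1 t i)
     + 2 * \<delta> / real N1 * (\<Sum>i=1..N1. (x1 t i)^2 * (1 - (x1 t i)^2))
     - \<alpha> / real N2 * (\<Sum>j=1..N2. \<Sum>k=1..N2. q k j t * (x2 t k - x2 t j)^2)
     - 2 * \<alpha> / real N2 * (\<Sum>k=1..N1. \<Sum>j=1..N2. r k j t * (x1 t k - x2 t j) * x2 t j)
     + 2 * \<delta> / real N2 * (\<Sum>j=1..N2. (x2 t j)^2 * (1 - (x2 t j)^2))"

end

theory Submission imports Defs begin

text \<open>Differentiating $M_2$ along the flow, the symmetric attraction terms become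
  $-\sum p_{k,i}(x_k-x_i)^2 \le 0$, the repulsion terms are bounded by $M_2$ times a constant, and
  the double-well terms by $(1+L)^2/4 - L\,M_2$ for any $L$.  Choosing $L$ large gives
  $\frac{d}{dt}M_2 \le C - 2\delta M_2$, so $M_2$ decreases whenever it exceeds $C/(2\delta)$ and
  therefore never rises above $\max(M_2(0), C/(2\delta))$.\<close>

lemma le_max_if_deriv_neg_above:
  fixes f f' :: "real \<Rightarrow> real"
  assumes der: "\<And>t. t \<ge> a \<Longrightarrow> (f has_real_derivative f' t) (at t within {a..})"
    and neg: "\<And>t. t \<ge> a \<Longrightarrow> f t > R \<Longrightarrow> f' t < 0"
    and t: "t \<ge> a"
  shows "f t \<le> max (f a) R"
proof (rule ccontr)
  define B where "B = max (f a) R"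
  assume "\<not> f t \<le> max (f a) R"
  hence ft: "f t > B" unfolding B_def by (simp add: not_le)
  have "continuous_on {a..} f"
    using der by (intro DERIV_continuous_on) auto
  hence "continuous_on {a..t} f"
    by (rule continuous_on_subset) auto
  define A where "A = {a..t} \<inter> f -` {..B}"
  have "closed A"
    unfolding A_def using \<open>continuous_on {a..t} f\<close>
    by (intro continuous_closed_preimage) auto
  hence "compact A"
    unfolding A_def by (metis compact_Icc compact_Int_closed inf.idem inf_assoc)
  moreover have "a \<in> A" using t unfolding A_def B_def by auto
  ultimately obtain s where sA: "s \<in> A" and smax: "\<forall>u\<in>A. u \<le> s"
    using compact_attains_sup by blast
  have s: "a \<le> s" "s \<le> t" "f s \<le> B" using sA unfolding A_def by auto
  have "s \<noteq> t" using ft s by auto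
  hence st: "s < t" using s by simp
  have "\<exists>x\<in>{s<..<t}. f t - f s = f' x * (t - s)"
  proof (rule mvt_simple[OF st])
    fix x assume "s \<le> x" "x \<le> t"
    with s have "x \<ge> a" by simp
    from der[OF this] have "(f has_real_derivative f' x) (at x within {s..t})"
      by (rule has_field_derivative_subset) (use s in auto)
    thus "(f has_derivative (\<lambda>h. f' x * h)) (at x within {s..t})"
      by (simp add: has_field_derivative_def)
  qed
  then obtain x where x: "s < x" "x < t" "f t - f s = f' x * (t - s)" by auto
  \<comment> \<open>\<open>x\<close> lies beyond the last point \<open>s\<close> of \<open>[a,t]\<close> where \<open>f \<le> B\<close>\<close>
  have "x \<notin> A" using smax x by force
  hence "f x > B" using x s unfolding A_def by auto
  hence "f' x < 0" using neg x s unfolding B_def by auto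
  hence "f' x * (t - s) < 0" using st by (simp add: mult_neg_pos)
  thus False using x ft s by linarith
qed

lemma M2grp_has_real_derivative:
  assumes "\<And>i. i \<in> {1..N} \<Longrightarrow> ((\<lambda>s. x s i) has_real_derivative x' i) (at t within T)"
  shows "((\<lambda>s. M2grp N (x s)) has_real_derivative (\<Sum>i=1..N. 2 * x t i * x' i) / real N)
           (at t within T)"
proof -
  have "((\<lambda>s. \<Sum>i=1..N. (x s i)^2) has_real_derivative (\<Sum>i=1..N. 2 * x t i * x' i))
          (at t within T)"
  proof (rule DERIV_sum)
    fix i assume "i \<in> {1..N}"
    from DERIV_power[OF assms[OF this], of 2]
    show "((\<lambda>s. (x s i)^2) has_real_derivative 2 * x t i * x' i) (at t within T)"
      by (simp add: algebra_simps)
  qed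
  from DERIV_cmult[OF this, of "1 / real N"] show ?thesis
    unfolding M2grp_def by simp
qed

lemma double_sum_symmetric_diff_mult:
  fixes P :: "'i \<Rightarrow> 'i \<Rightarrow> real" and y :: "'i \<Rightarrow> real"
  assumes sym: "\<And>i k. i \<in> I \<Longrightarrow> k \<in> I \<Longrightarrow> P k i = P i k"
  shows "2 * (\<Sum>i\<in>I. \<Sum>k\<in>I. P k i * (y k - y i) * y i)
           = - (\<Sum>i\<in>I. \<Sum>k\<in>I. P k i * (y k - y i)^2)"
proof -
  have sq: "(\<Sum>i\<in>I. \<Sum>k\<in>I. P k i * (y k - y i)^2)
      = (\<Sum>i\<in>I. \<Sum>k\<in>I. P k i * (y k - y i) * y k) - (\<Sum>i\<in>I. \<Sum>k\<in>I. P k i * (y k - y i) * y i)"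
    by (simp add: sum_subtractf[symmetric] power2_eq_square algebra_simps)
  have "(\<Sum>i\<in>I. \<Sum>k\<in>I. P k i * (y k - y i) * y k) = (\<Sum>k\<in>I. \<Sum>i\<in>I. P k i * (y k - y i) * y k)"
    by (rule sum.swap)
  also have "\<dots> = (\<Sum>k\<in>I. \<Sum>i\<in>I. - (P i k * (y i - y k) * y k))"
    by (intro sum.cong refl) (simp add: sym algebra_simps)
  also have "\<dots> = - (\<Sum>i\<in>I. \<Sum>k\<in>I. P k i * (y k - y i) * y i)"
    by (simp add: sum_negf)
  finally show ?thesis using sq by simp
qed

lemma dM2_eq_weighted_rhs_sums:
  assumes p_sym: "\<And>i k. i \<in> {1..N1} \<Longrightarrow> k \<in> {1..N1} \<Longrightarrow> p i k t = p k i t"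
    and q_sym: "\<And>j k. j \<in> {1..N2} \<Longrightarrow> k \<in> {1..N2} \<Longrightarrow> q j k t = q k j t"
  shows "(\<Sum>i=1..N1. 2 * x1 t i * rhs1 \<alpha> \<delta> N1 N2 p r x1 x2 t i) / real N1
       + (\<Sum>j=1..N2. 2 * x2 t j * rhs2 \<alpha> \<delta> N1 N2 q r x1 x2 t j) / real N2
       = dM2 \<alpha> \<delta> N1 N2 p q r x1 x2 t"
proof -
  have rhs1_sum: "(\<Sum>i=1..N1. 2 * x1 t i * rhs1 \<alpha> \<delta> N1 N2 p r x1 x2 t i)
     = \<alpha> * (2 * (\<Sum>i=1..N1. \<Sum>k=1..N1. p k i t * (x1 t k - x1 t i) * x1 t i))
       - 2 * \<alpha> * (\<Sum>i=1..N1. \<Sum>k=1..N2. r i k t * (x2 t k - x1 t i) * x1 t i)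
       + 2 * \<delta> * (\<Sum>i=1..N1. (x1 t i)^2 * (1 - (x1 t i)^2))"
    unfolding rhs1_def
    by (simp add: sum_distrib_left sum_distrib_right sum.distrib sum_subtractf algebra_simps
        power2_eq_square)
  have rhs2_sum: "(\<Sum>j=1..N2. 2 * x2 t j * rhs2 \<alpha> \<delta> N1 N2 q r x1 x2 t j)
     = \<alpha> * (2 * (\<Sum>j=1..N2. \<Sum>k=1..N2. q k j t * (x2 t k - x2 t j) * x2 t j))
       - 2 * \<alpha> * (\<Sum>j=1..N2. \<Sum>k=1..N1. r k j t * (x1 t k - x2 t j) * x2 t j)
       + 2 * \<delta> * (\<Sum>j=1..N2. (x2 t j)^2 * (1 - (x2 t j)^2))"
    unfolding rhs2_def
    by (simp add: sum_distrib_left sum_distrib_right sum.distrib sum_subtractf algebra_simps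
        power2_eq_square)
  have p_part: "2 * (\<Sum>i=1..N1. \<Sum>k=1..N1. p k i t * (x1 t k - x1 t i) * x1 t i)
      = - (\<Sum>i=1..N1. \<Sum>k=1..N1. p k i t * (x1 t k - x1 t i)^2)"
    by (rule double_sum_symmetric_diff_mult) (use p_sym in auto)
  have q_part: "2 * (\<Sum>j=1..N2. \<Sum>k=1..N2. q k j t * (x2 t k - x2 t j) * x2 t j)
      = - (\<Sum>j=1..N2. \<Sum>k=1..N2. q k j t * (x2 t k - x2 t j)^2)"
    by (rule double_sum_symmetric_diff_mult) (use q_sym in auto)
  show ?thesis
    unfolding rhs1_sum rhs2_sum p_part q_part dM2_def sum.swap[of _ "{1..N1}" "{1..N2}"]
    by (simp add: diff_divide_distrib add_divide_distrib)
qed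

lemma sq_mult_one_minus_sq_le:
  fixes a L :: real
  shows "a^2 * (1 - a^2) \<le> (1 + L)^2 / 4 - L * a^2"
proof -
  have "0 \<le> (a^2 - (1 + L) / 2)^2" by simp
  thus ?thesis by (simp add: power2_eq_square field_simps)
qed

lemma M2grp_double_well_le:
  assumes "N \<ge> 1"
  shows "(\<Sum>i=1..N. (a i)^2 * (1 - (a i)^2)) / real N \<le> (1 + L)^2 / 4 - L * M2grp N a"
proof -
  have "(\<Sum>i=1..N. (a i)^2 * (1 - (a i)^2)) \<le> (\<Sum>i=1..N. (1 + L)^2 / 4 - L * (a i)^2)"
    by (intro sum_mono sq_mult_one_minus_sq_le)
  also have "\<dots> = real N * ((1 + L)^2 / 4 - L * M2grp N a)"
    using assms by (simp add: M2grp_def sum_subtractf sum_distrib_left algebra_simps)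
  finally show ?thesis
    using assms by (simp add: divide_le_eq mult.commute)
qed

lemma repulsion_term_le:
  fixes r a b D :: real
  assumes "0 \<le> r" "r \<le> D"
  shows "- (r * (b - a) * a) \<le> 2 * D * (a^2 + b^2)"
proof -
  have "0 \<le> (a + b / 2)^2 + 7 / 4 * b^2" by simp
  hence "a^2 - a * b \<le> 2 * (a^2 + b^2)"
    by (simp add: power2_eq_square algebra_simps)
  have "- (r * (b - a) * a) = r * (a^2 - a * b)"
    by (simp add: algebra_simps power2_eq_square)
  also have "\<dots> \<le> r * (2 * (a^2 + b^2))"
    using \<open>a^2 - a * b \<le> 2 * (a^2 + b^2)\<close> \<open>0 \<le> r\<close> by (rule mult_left_mono)
  also have "\<dots> \<le> D * (2 * (a^2 + b^2))"
    using \<open>r \<le> D\<close> by (rule mult_right_mono) simp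
  finally show ?thesis by (simp add: algebra_simps)
qed

lemma M2grp_repulsion_le:
  assumes "N1 \<ge> 1" and r: "\<And>i k. i \<in> {1..N1} \<Longrightarrow> k \<in> {1..N2} \<Longrightarrow> 0 \<le> r i k \<and> r i k \<le> D"
  shows "- (\<Sum>k=1..N2. \<Sum>i=1..N1. r i k * (b k - a i) * a i) / real N1
           \<le> 2 * D * real N2 * (M2grp N1 a + M2grp N2 b)"
proof -
  have "- (\<Sum>k=1..N2. \<Sum>i=1..N1. r i k * (b k - a i) * a i)
      = (\<Sum>k=1..N2. \<Sum>i=1..N1. - (r i k * (b k - a i) * a i))"
    by (simp add: sum_negf)
  also have "\<dots> \<le> (\<Sum>k=1..N2. \<Sum>i=1..N1. 2 * D * ((a i)^2 + (b k)^2))"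
    using r by (intro sum_mono repulsion_term_le) auto
  also have "\<dots> = 2 * D * real N2 * (M2grp N1 a + M2grp N2 b) * real N1"
    using assms
    by (simp add: M2grp_def sum_distrib_left sum.distrib sum.swap[of _ "{1..N2}"] algebra_simps)
  finally show ?thesis
    using assms by (subst pos_divide_le_eq) auto
qed

lemma M2tot_has_derivative_dM2:
  assumes p_sym: "\<And>i k. i \<in> {1..N1} \<Longrightarrow> k \<in> {1..N1} \<Longrightarrow> p i k t = p k i t"
    and q_sym: "\<And>j k. j \<in> {1..N2} \<Longrightarrow> k \<in> {1..N2} \<Longrightarrow> q j k t = q k j t"
    and x1': "\<And>i. i \<in> {1..N1} \<Longrightarrow>
      ((\<lambda>s. x1 s i) has_real_derivative rhs1 \<alpha> \<delta> N1 N2 p r x1 x2 t i) (at t within T)"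
    and x2': "\<And>j. j \<in> {1..N2} \<Longrightarrow>
      ((\<lambda>s. x2 s j) has_real_derivative rhs2 \<alpha> \<delta> N1 N2 q r x1 x2 t j) (at t within T)"
  shows "((\<lambda>s. M2tot N1 N2 (x1 s) (x2 s)) has_real_derivative dM2 \<alpha> \<delta> N1 N2 p q r x1 x2 t)
           (at t within T)"
proof -
  have d1: "((\<lambda>s. M2grp N1 (x1 s)) has_real_derivative
      (\<Sum>i=1..N1. 2 * x1 t i * rhs1 \<alpha> \<delta> N1 N2 p r x1 x2 t i) / real N1) (at t within T)"
    using x1' by (rule M2grp_has_real_derivative)
  have d2: "((\<lambda>s. M2grp N2 (x2 s)) has_real_derivative
      (\<Sum>j=1..N2. 2 * x2 t j * rhs2 \<alpha> \<delta> N1 N2 q r x1 x2 t j) / real N2) (at t within T)"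
    using x2' by (rule M2grp_has_real_derivative)
  have sums_eq: "(\<Sum>i=1..N1. 2 * x1 t i * rhs1 \<alpha> \<delta> N1 N2 p r x1 x2 t i) / real N1
      + (\<Sum>j=1..N2. 2 * x2 t j * rhs2 \<alpha> \<delta> N1 N2 q r x1 x2 t j) / real N2
      = dM2 \<alpha> \<delta> N1 N2 p q r x1 x2 t"
    using p_sym q_sym by (rule dM2_eq_weighted_rhs_sums)
  show ?thesis
    unfolding M2tot_def sums_eq[symmetric] by (rule DERIV_add[OF d1 d2])
qed

lemma dM2_le:
  fixes L :: real
  assumes "0 \<le> \<alpha>" "0 \<le> \<delta>" "N1 \<ge> 1" "N2 \<ge> 1"
    and p_nonneg: "\<And>i k. i \<in> {1..N1} \<Longrightarrow> k \<in> {1..N1} \<Longrightarrow> 0 \<le> p i k t"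
    and q_nonneg: "\<And>j k. j \<in> {1..N2} \<Longrightarrow> k \<in> {1..N2} \<Longrightarrow> 0 \<le> q j k t"
    and r: "\<And>i k. i \<in> {1..N1} \<Longrightarrow> k \<in> {1..N2} \<Longrightarrow> 0 \<le> r i k t \<and> r i k t \<le> D"
  shows "dM2 \<alpha> \<delta> N1 N2 p q r x1 x2 t
           \<le> \<delta> * (1 + L)^2 + (4 * \<alpha> * D * (real N1 + real N2) - 2 * \<delta> * L)
               * M2tot N1 N2 (x1 t) (x2 t)"
proof -
  define u where "u = M2grp N1 (x1 t)"
  define v where "v = M2grp N2 (x2 t)"
  define A1 where "A1 = (\<Sum>i=1..N1. \<Sum>k=1..N1. p k i t * (x1 t k - x1 t i)^2)"
  define A2 where "A2 = (\<Sum>j=1..N2. \<Sum>k=1..N2. q k j t * (x2 t k - x2 t j)^2)"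
  define R1 where "R1 = (\<Sum>k=1..N2. \<Sum>i=1..N1. r i k t * (x2 t k - x1 t i) * x1 t i)"
  define R2 where "R2 = (\<Sum>k=1..N1. \<Sum>j=1..N2. r k j t * (x1 t k - x2 t j) * x2 t j)"
  define W1 where "W1 = (\<Sum>i=1..N1. (x1 t i)^2 * (1 - (x1 t i)^2))"
  define W2 where "W2 = (\<Sum>j=1..N2. (x2 t j)^2 * (1 - (x2 t j)^2))"
  have "0 \<le> A1" unfolding A1_def by (intro sum_nonneg mult_nonneg_nonneg p_nonneg) auto
  have "0 \<le> A2" unfolding A2_def by (intro sum_nonneg mult_nonneg_nonneg q_nonneg) auto
  have "- R1 / real N1 \<le> 2 * D * real N2 * (u + v)"
    unfolding R1_def u_def v_def
    by (rule M2grp_repulsion_le[where r = "\<lambda>i k. r i k t"]) (use assms in auto)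
  have "- R2 / real N2 \<le> 2 * D * real N1 * (u + v)"
    unfolding R2_def u_def v_def add.commute[of "M2grp N1 (x1 t)"]
    by (rule M2grp_repulsion_le[where r = "\<lambda>j k. r k j t"]) (use assms in auto)
  have "W1 / real N1 \<le> (1 + L)^2 / 4 - L * u"
    unfolding W1_def u_def by (rule M2grp_double_well_le) fact
  have "W2 / real N2 \<le> (1 + L)^2 / 4 - L * v"
    unfolding W2_def v_def by (rule M2grp_double_well_le) fact
  have "dM2 \<alpha> \<delta> N1 N2 p q r x1 x2 t
      = - \<alpha> * (A1 / real N1) + 2 * \<alpha> * (- R1 / real N1) + 2 * \<delta> * (W1 / real N1)
        - \<alpha> * (A2 / real N2) + 2 * \<alpha> * (- R2 / real N2) + 2 * \<delta> * (W2 / real N2)"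
    unfolding dM2_def A1_def A2_def R1_def R2_def W1_def W2_def by simp
  also have "\<dots> \<le> 0 + 2 * \<alpha> * (2 * D * real N2 * (u + v)) + 2 * \<delta> * ((1 + L)^2 / 4 - L * u)
        - 0 + 2 * \<alpha> * (2 * D * real N1 * (u + v)) + 2 * \<delta> * ((1 + L)^2 / 4 - L * v)"
    using assms \<open>0 \<le> A1\<close> \<open>0 \<le> A2\<close> \<open>- R1 / real N1 \<le> _\<close> \<open>- R2 / real N2 \<le> _\<close>
      \<open>W1 / real N1 \<le> _\<close> \<open>W2 / real N2 \<le> _\<close>
    by (intro add_mono diff_mono mult_left_mono) auto
  also have "\<dots> = \<delta> * (1 + L)^2 + (4 * \<alpha> * D * (real N1 + real N2) - 2 * \<delta> * L) * (u + v)"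
    by (simp add: algebra_simps)
  finally show ?thesis unfolding u_def v_def M2tot_def .
qed

definition M2_bound :: "real \<Rightarrow> real \<Rightarrow> real \<Rightarrow> nat \<Rightarrow> nat \<Rightarrow> real \<Rightarrow> real" where
  "M2_bound \<alpha> \<delta> D N1 N2 m = max m ((2 * \<alpha> * D * (real N1 + real N2) / \<delta> + 2)^2 / 2)"

lemma M2tot_le_M2_bound:
  assumes "0 \<le> \<alpha>" "0 < \<delta>" "N1 \<ge> 1" "N2 \<ge> 1" "t \<ge> 0"
    and p: "\<And>t i k. t \<ge> 0 \<Longrightarrow> i \<in> {1..N1} \<Longrightarrow> k \<in> {1..N1} \<Longrightarrow> p i k t = p k i t \<and> 0 \<le> p i k t"
    and q: "\<And>t j k. t \<ge> 0 \<Longrightarrow> j \<in> {1..N2} \<Longrightarrow> k \<in> {1..N2} \<Longrightarrow> q j k t = q k j t \<and> 0 \<le> q j k t"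
    and r: "\<And>t i k. t \<ge> 0 \<Longrightarrow> i \<in> {1..N1} \<Longrightarrow> k \<in> {1..N2} \<Longrightarrow> 0 \<le> r i k t \<and> r i k t \<le> D"
    and x1': "\<And>t i. t \<ge> 0 \<Longrightarrow> i \<in> {1..N1} \<Longrightarrow>
      ((\<lambda>s. x1 s i) has_real_derivative rhs1 \<alpha> \<delta> N1 N2 p r x1 x2 t i) (at t within {0..})"
    and x2': "\<And>t j. t \<ge> 0 \<Longrightarrow> j \<in> {1..N2} \<Longrightarrow>
      ((\<lambda>s. x2 s j) has_real_derivative rhs2 \<alpha> \<delta> N1 N2 q r x1 x2 t j) (at t within {0..})"
  shows "M2tot N1 N2 (x1 t) (x2 t) \<le> M2_bound \<alpha> \<delta> D N1 N2 (M2tot N1 N2 (x1 0) (x2 0))"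
proof -
  define M where "M s = M2tot N1 N2 (x1 s) (x2 s)" for s
  define L where "L = 2 * \<alpha> * D * (real N1 + real N2) / \<delta> + 1"
  \<comment> \<open>chosen so that the coefficient of \<open>M\<close> in \<open>dM2_le\<close> becomes \<open>-2\<delta>\<close>\<close>
  have "4 * \<alpha> * D * (real N1 + real N2) - 2 * \<delta> * L = - 2 * \<delta>"
    unfolding L_def using \<open>0 < \<delta>\<close> by (simp add: field_simps)
  hence dM2_bound: "dM2 \<alpha> \<delta> N1 N2 p q r x1 x2 s \<le> \<delta> * (1 + L)^2 - 2 * \<delta> * M s" if "s \<ge> 0" for s
    using dM2_le[of \<alpha> \<delta> N1 N2 p s q r D x1 x2 L] assms that unfolding M_def by auto
  have "M t \<le> max (M 0) ((1 + L)^2 / 2)"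
  proof (rule le_max_if_deriv_neg_above[where f = M])
    show "(M has_real_derivative dM2 \<alpha> \<delta> N1 N2 p q r x1 x2 s) (at s within {0..})"
      if "s \<ge> 0" for s
      unfolding M_def using that p q
      by (intro M2tot_has_derivative_dM2 x1' x2') auto
    show "dM2 \<alpha> \<delta> N1 N2 p q r x1 x2 s < 0" if "s \<ge> 0" "M s > (1 + L)^2 / 2" for s
    proof -
      have "\<delta> * (1 + L)^2 < \<delta> * (2 * M s)"
        using that \<open>0 < \<delta>\<close> by (intro mult_strict_left_mono) auto
      thus ?thesis using dM2_bound[OF \<open>s \<ge> 0\<close>] by linarith
    qed
  qed fact
  moreover have "1 + L = 2 * \<alpha> * D * (real N1 + real N2) / \<delta> + 2"
    unfolding L_def by simp
  ultimately show ?thesis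
    unfolding M_def M2_bound_def by simp
qed

theorem lemma2p1:
  shows "\<exists>Minf :: real \<Rightarrow> real \<Rightarrow> real \<Rightarrow> nat \<Rightarrow> nat \<Rightarrow> real \<Rightarrow> real.
    \<forall>(\<alpha>::real) (\<delta>::real) (S::real) (D::real) (N1::nat) (N2::nat)
      (p :: nat \<Rightarrow> nat \<Rightarrow> real \<Rightarrow> real) (q :: nat \<Rightarrow> nat \<Rightarrow> real \<Rightarrow> real)
      (r :: nat \<Rightarrow> nat \<Rightarrow> real \<Rightarrow> real)
      (x1 :: real \<Rightarrow> nat \<Rightarrow> real) (x2 :: real \<Rightarrow> nat \<Rightarrow> real).
      \<alpha> > 0 \<and> \<delta> > 0 \<and> S \<ge> 0 \<and> D > 0 \<and> N1 \<ge> 1 \<and> N2 \<ge> 1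
      \<and> (\<forall>i\<in>{1..N1}. \<forall>k\<in>{1..N1}. continuous_on {0..} (p i k))
      \<and> (\<forall>j\<in>{1..N2}. \<forall>k\<in>{1..N2}. continuous_on {0..} (q j k))
      \<and> (\<forall>i\<in>{1..N1}. \<forall>k\<in>{1..N2}. continuous_on {0..} (r i k))
      \<and> (\<forall>t\<ge>0. \<forall>i\<in>{1..N1}. \<forall>k\<in>{1..N1}. p i k t = p k i t \<and> p i k t \<ge> S)
      \<and> (\<forall>t\<ge>0. \<forall>j\<in>{1..N2}. \<forall>k\<in>{1..N2}. q j k t = q k j t \<and> q j k t \<ge> S)
      \<and> (\<forall>t\<ge>0. \<forall>i\<in>{1..N1}. \<forall>k\<in>{1..N2}. 0 \<le> r i k t \<and> r i k t \<le> D)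
      \<and> (\<forall>i\<in>{1..N1}. continuous_on {0..} (\<lambda>t. rhs1 \<alpha> \<delta> N1 N2 p r x1 x2 t i))
      \<and> (\<forall>j\<in>{1..N2}. continuous_on {0..} (\<lambda>t. rhs2 \<alpha> \<delta> N1 N2 q r x1 x2 t j))
      \<and> (\<forall>t\<ge>0. \<forall>i\<in>{1..N1}.
            ((\<lambda>s. x1 s i) has_real_derivative rhs1 \<alpha> \<delta> N1 N2 p r x1 x2 t i) (at t within {0..}))
      \<and> (\<forall>t\<ge>0. \<forall>j\<in>{1..N2}.
            ((\<lambda>s. x2 s j) has_real_derivative rhs2 \<alpha> \<delta> N1 N2 q r x1 x2 t j) (at t within {0..}))
      \<longrightarrow>
        (\<forall>t\<ge>0. ((\<lambda>s. M2tot N1 N2 (x1 s) (x2 s)) has_real_derivative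
                    dM2 \<alpha> \<delta> N1 N2 p q r x1 x2 t) (at t within {0..}))
      \<and> (\<forall>t\<ge>0. M2tot N1 N2 (x1 t) (x2 t) \<le> Minf \<alpha> \<delta> D N1 N2 (M2tot N1 N2 (x1 0) (x2 0)))"
  apply (intro exI[of _ M2_bound] allI impI, elim conjE, intro conjI allI impI)
  subgoal by (rule M2tot_has_derivative_dM2; simp)
  subgoal for \<alpha> \<delta> S D N1 N2 p q r x1 x2 t
    by (rule M2tot_le_M2_bound[where p = p and q = q and r = r])
      (simp_all, (meson atLeastAtMost_iff order.trans)+)
  done

end
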